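(* Let $(B,+,\circ)$ be a left brace with Yang–Baxter map $r$, let $X\subseteq B$ be such that $(X,r)$ is a solution of the set-theoretic Yang–Baxter equation, and let $c\in B$ be central in $(B,\circ)$. (1) If $k_1(x)=c\circ x-c$ satisfies $k_1(X)\subseteq X$ and $c^2=c\circ c\in\mathrm{Soc}(B)$, then $k_1:X\to X$ is a reflection of $(X,r)$ with $k_1\circ k_1=\mathrm{id}_X$; in particular this holds if $c\circ c=0$. (2) If $2\,(c\circ x)=2c+2x$ for all $x\in X$, $c\circ c=0$, and $k_2(x)=c\circ x+c$ satisfies $k_2(X)\subseteq X$, then $k_2:X\to X$ is a reflection of $(X,r)$ with $k_2\circ k_2=\mathrm{id}_X$.
   Context: A (left) brace is a triple $(B,+,\circ)$ such that $(B,+)$ is an abelian group with identity $0$ (which is also the identity of $(B,\circ)$), $(B,\circ)$ is a group, and $x\circ(y+z)=x\circ y+x\circ z-x$ for all $x,y,z\in B$. The Yang–Baxter map is $r(x,y)=(\sigma_x(y),\tau_y(x))$ with $\sigma_x(y)=x\circ y-x$ and $\tau_y(x)=(\sigma_x(y))^{-1}\circ x-(\sigma_x(y))^{-1}$. For $X\subseteq B$, $(X,r)$ is a solution of the set-theoretic Yang–Baxter equation if $r(X\times X)\subseteq X\times X$ and $(\mathrm{id}\times r)(r\times\mathrm{id})(\mathrm{id}\times r)=(r\times\mathrm{id})(\mathrm{id}\times r)(r\times\mathrm{id})$ on $X^3$. A map $k:X\to X$ is a reflection of $(X,r)$ if $r(\mathrm{id}\times k)r(\mathrm{id}\times k)=(\mathrm{id}\times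 k)r(\mathrm{id}\times k)r$ on $X\times X$. $\mathrm{Soc}(B)=\{a\in B: a\circ b=a+b\ \forall b\in B\}$. *)

theory Defs
  imports Main
begin

text \<open>A left brace on the whole type 'a: the additive group is the type-class
  abelian group (+, 0, -), and m is the circle operation.\<close>

definition left_brace :: "('a::ab_group_add \<Rightarrow> 'a \<Rightarrow> 'a) \<Rightarrow> bool" where
  "left_brace m \<longleftrightarrow>
     (\<forall>x y z. m (m x y) z = m x (m y z)) \<and>
     (\<forall>x. m 0 x = x \<and> m x 0 = x) \<and>
     (\<forall>x. \<exists>y. m x y = 0 \<and> m y x = 0) \<and>
     (\<forall>x y z. m x (y + z) = m x y + m x z - x)"

definition circ_inv :: "('a::ab_group_add \<Rightarrow> 'a \<Rightarrow> 'a) \<Rightarrow> 'a \<Rightarrow> 'a" where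
  "circ_inv m x = (SOME y. m x y = 0 \<and> m y x = 0)"

definition brace_sigma :: "('a::ab_group_add \<Rightarrow> 'a \<Rightarrow> 'a) \<Rightarrow> 'a \<Rightarrow> 'a \<Rightarrow> 'a" where
  "brace_sigma m x y = m x y - x"

definition brace_tau :: "('a::ab_group_add \<Rightarrow> 'a \<Rightarrow> 'a) \<Rightarrow> 'a \<Rightarrow> 'a \<Rightarrow> 'a" where
  "brace_tau m y x =
     m (circ_inv m (brace_sigma m x y)) x - circ_inv m (brace_sigma m x y)"

definition yb_map :: "('a::ab_group_add \<Rightarrow> 'a \<Rightarrow> 'a) \<Rightarrow> 'a \<times> 'a \<Rightarrow> 'a \<times> 'a" where
  "yb_map m p = (brace_sigma m (fst p) (snd p), brace_tau m (snd p) (fst p))"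

definition r12 :: "('a \<times> 'a \<Rightarrow> 'a \<times> 'a) \<Rightarrow> 'a \<times> 'a \<times> 'a \<Rightarrow> 'a \<times> 'a \<times> 'a" where
  "r12 r t = (case t of (x, y, z) \<Rightarrow> (fst (r (x, y)), snd (r (x, y)), z))"

definition r23 :: "('a \<times> 'a \<Rightarrow> 'a \<times> 'a) \<Rightarrow> 'a \<times> 'a \<times> 'a \<Rightarrow> 'a \<times> 'a \<times> 'a" where
  "r23 r t = (case t of (x, y, z) \<Rightarrow> (x, fst (r (y, z)), snd (r (y, z))))"

definition ybe_solution :: "'a set \<Rightarrow> ('a \<times> 'a \<Rightarrow> 'a \<times> 'a) \<Rightarrow> bool" where
  "ybe_solution X r \<longleftrightarrow>
     (\<forall>x\<in>X. \<forall>y\<in>X. r (x, y) \<in> X \<times> X) \<and>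
     (\<forall>x\<in>X. \<forall>y\<in>X. \<forall>z\<in>X.
        r23 r (r12 r (r23 r (x, y, z))) = r12 r (r23 r (r12 r (x, y, z))))"

definition id_times :: "('a \<Rightarrow> 'a) \<Rightarrow> 'a \<times> 'a \<Rightarrow> 'a \<times> 'a" where
  "id_times k p = (fst p, k (snd p))"

definition is_reflection :: "'a set \<Rightarrow> ('a \<times> 'a \<Rightarrow> 'a \<times> 'a) \<Rightarrow> ('a \<Rightarrow> 'a) \<Rightarrow> bool" where
  "is_reflection X r k \<longleftrightarrow>
     (\<forall>x\<in>X. \<forall>y\<in>X.
        r (id_times k (r (id_times k (x, y)))) = id_times k (r (id_times k (r (x, y)))))"

definition brace_soc :: "('a::ab_group_add \<Rightarrow> 'a \<Rightarrow> 'a) \<Rightarrow> 'a set" where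
  "brace_soc m = {a. \<forall>b. m a b = a + b}"

end

theory Submission
  imports Defs
begin

text \<open>Write \<open>\<lambda>\<^sub>a x = a \<circ> x - a\<close>. Each \<open>\<lambda>\<^sub>a\<close> is an additive automorphism,
  \<open>a \<mapsto> \<lambda>\<^sub>a\<close> is a homomorphism from \<open>(B,\<circ>)\<close>, and \<open>r(x,y) = (\<lambda>\<^sub>x y, \<lambda>\<^bsub>(\<lambda>\<^sub>x y)\<^sup>-\<^sup>1\<^esub> x)\<close>.
  Both maps in question have the form \<open>k = \<lambda>\<^sub>c + d\<close> with \<open>d = 0\<close> resp. \<open>d = 2c\<close>.
  Since \<open>c\<close> is central, \<open>\<lambda>\<^sub>c\<close> commutes with every \<open>\<lambda>\<^sub>a\<close>, so conjugating \<open>k\<close> by \<open>\<lambda>\<^sub>a\<close>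
  gives back \<open>k\<close> whenever \<open>\<lambda>\<^sub>a\<close> fixes \<open>d\<close>; the hypothesis \<open>2(c \<circ> x) = 2c + 2x\<close> says
  exactly that \<open>\<lambda>\<^sub>x\<close> fixes \<open>2c\<close> for \<open>x \<in> X\<close>. With this, both sides of the reflection
  equation reduce to \<open>(k x, \<lambda>\<^sub>c \<lambda>\<^bsub>(k x)\<^sup>-\<^sup>1\<^esub> \<lambda>\<^sub>x y + d)\<close>. Finally \<open>k (k x) =
  \<lambda>\<^bsub>c\<circ>c\<^esub> x + \<lambda>\<^sub>c d + d\<close>, which is \<open>x\<close> when \<open>c \<circ> c\<close> lies in the socle and \<open>\<lambda>\<^sub>c d = -d\<close>.\<close>

locale brace =
  fixes m :: "'a::ab_group_add \<Rightarrow> 'a \<Rightarrow> 'a"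
  assumes left_brace: "left_brace m"
begin

lemma circ_assoc: "m (m x y) z = m x (m y z)"
  using left_brace by (simp add: left_brace_def)

lemma circ_zero [simp]: "m 0 x = x" "m x 0 = x"
  using left_brace by (simp_all add: left_brace_def)

lemma circ_add: "m x (y + z) = m x y + m x z - x"
  using left_brace by (simp add: left_brace_def)

lemma circ_diff: "m x (y - z) = m x y - m x z + x"
  using circ_add[of x "y - z" z] by (simp add: algebra_simps)

lemma circ_inv: "m x (circ_inv m x) = 0" "m (circ_inv m x) x = 0"
proof -
  have "\<exists>y. m x y = 0 \<and> m y x = 0"
    using left_brace by (simp add: left_brace_def)
  then have "m x (circ_inv m x) = 0 \<and> m (circ_inv m x) x = 0"
    unfolding circ_inv_def by (rule someI_ex)
  then show "m x (circ_inv m x) = 0" "m (circ_inv m x) x = 0" by simp_all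
qed

definition brace_lambda :: "'a \<Rightarrow> 'a \<Rightarrow> 'a" where
  "brace_lambda a x = m a x - a"

lemma brace_lambda_zero [simp]: "brace_lambda 0 x = x"
  by (simp add: brace_lambda_def)

lemma brace_lambda_zero_right [simp]: "brace_lambda a 0 = 0"
  by (simp add: brace_lambda_def)

lemma brace_lambda_add: "brace_lambda a (x + y) = brace_lambda a x + brace_lambda a y"
  by (simp add: brace_lambda_def circ_add algebra_simps)

lemma brace_lambda_circ: "brace_lambda (m a b) x = brace_lambda a (brace_lambda b x)"
  by (simp add: brace_lambda_def circ_diff circ_assoc)

lemma brace_lambda_inv_cancel: "brace_lambda (circ_inv m a) (brace_lambda a x) = x"
  by (metis brace_lambda_circ brace_lambda_zero circ_inv(2))

lemma brace_lambda_soc: "a \<in> brace_soc m \<Longrightarrow> brace_lambda a x = x"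
  by (simp add: brace_soc_def brace_lambda_def)

lemma yb_map_eq_lambda:
  "yb_map m (x, y) =
     (brace_lambda x y, brace_lambda (circ_inv m (brace_lambda x y)) x)"
  by (simp add: yb_map_def brace_tau_def brace_sigma_def brace_lambda_def)

context
  fixes c :: 'a
  assumes central: "\<forall>x. m c x = m x c"
begin

lemma brace_lambda_central_commute:
  "brace_lambda c (brace_lambda a x) = brace_lambda a (brace_lambda c x)"
  by (metis brace_lambda_circ central)

lemma brace_lambda_central_conj:
  "brace_lambda a (brace_lambda c (brace_lambda (circ_inv m a) x)) = brace_lambda c x"
  by (metis brace_lambda_central_commute brace_lambda_circ brace_lambda_zero circ_inv(1))

lemma shifted_lambda_conj:
  assumes "brace_lambda a d = d"
  shows "brace_lambda a (brace_lambda c (brace_lambda (circ_inv m a) x) + d)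
           = brace_lambda c x + d"
  using assms by (simp add: brace_lambda_add brace_lambda_central_conj)

lemma shifted_lambda_is_reflection:
  fixes d :: 'a
  defines "k \<equiv> \<lambda>x. brace_lambda c x + d"
  assumes closed: "\<forall>x\<in>X. \<forall>y\<in>X. yb_map m (x, y) \<in> X \<times> X"
    and k_closed: "k ` X \<subseteq> X"
    and fixes_d: "\<And>z. z \<in> X \<Longrightarrow> brace_lambda z d = d"
  shows "is_reflection X (yb_map m) k"
  unfolding is_reflection_def
proof (intro ballI)
  fix x y assume x: "x \<in> X" and y: "y \<in> X"
  let ?i = "circ_inv m"
  define a where "a = brace_lambda x (k y)"
  define u where "u = brace_lambda x y"
  have "a \<in> X" "u \<in> X"
    using closed x y k_closed by (auto simp: a_def u_def yb_map_eq_lambda)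
  then have first: "brace_lambda a (k (brace_lambda (?i a) x)) = k x"
    "brace_lambda u (k (brace_lambda (?i u) x)) = k x"
    by (simp_all add: k_def fixes_d shifted_lambda_conj)
  have "k x \<in> X" using x k_closed by blast
  then have fixes_d_inv: "brace_lambda (?i (k x)) d = d"
    by (metis brace_lambda_inv_cancel fixes_d)
  have second: "brace_lambda (?i (k x)) a = k (brace_lambda (?i (k x)) u)"
    using fixes_d_inv fixes_d[OF x]
    by (simp add: a_def u_def k_def brace_lambda_add brace_lambda_central_commute)
  show "yb_map m (id_times k (yb_map m (id_times k (x, y))))
      = id_times k (yb_map m (id_times k (yb_map m (x, y))))"
    using first second
    by (simp add: id_times_def yb_map_eq_lambda a_def[symmetric] u_def[symmetric])
qed

lemma shifted_lambda_involutive: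
  assumes "m c c \<in> brace_soc m" and "brace_lambda c d = - d"
  shows "brace_lambda c (brace_lambda c x + d) + d = x"
  using assms by (simp add: brace_lambda_add brace_lambda_soc flip: brace_lambda_circ)

end

end

theorem mainTheorem11:
  fixes m :: "'a::ab_group_add \<Rightarrow> 'a \<Rightarrow> 'a" and X :: "'a set" and c :: 'a
  assumes brace: "left_brace m"
    and sol: "ybe_solution X (yb_map m)"
    and central: "\<forall>x. m c x = m x c"
  shows
    "((\<lambda>x. m c x - c) ` X \<subseteq> X \<and> m c c \<in> brace_soc m \<longrightarrow>
        is_reflection X (yb_map m) (\<lambda>x. m c x - c) \<and>
        (\<forall>x\<in>X. m c (m c x - c) - c = x)) \<and>
     ((\<lambda>x. m c x - c) ` X \<subseteq> X \<and> m c c = 0 \<longrightarrow>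
        is_reflection X (yb_map m) (\<lambda>x. m c x - c) \<and>
        (\<forall>x\<in>X. m c (m c x - c) - c = x)) \<and>
     ((\<forall>x\<in>X. m c x + m c x = c + c + x + x) \<and> m c c = 0 \<and>
      (\<lambda>x. m c x + c) ` X \<subseteq> X \<longrightarrow>
        is_reflection X (yb_map m) (\<lambda>x. m c x + c) \<and>
        (\<forall>x\<in>X. m c (m c x + c) + c = x))"
proof -
  interpret brace m by (rule brace.intro) (rule brace)
  have closed: "\<forall>x\<in>X. \<forall>y\<in>X. yb_map m (x, y) \<in> X \<times> X"
    using sol by (simp add: ybe_solution_def)
  have soc_zero: "0 \<in> brace_soc m" by (simp add: brace_soc_def)
  have k1_as_shifted_lambda: "m c x - c = brace_lambda c x + 0" for x
    by (simp add: brace_lambda_def)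
  have k2_as_shifted_lambda: "m c x + c = brace_lambda c x + (c + c)" for x
    by (simp add: brace_lambda_def algebra_simps)
  have part1: "is_reflection X (yb_map m) (\<lambda>x. m c x - c) \<and> (\<forall>x\<in>X. m c (m c x - c) - c = x)"
    if "(\<lambda>x. m c x - c) ` X \<subseteq> X" "m c c \<in> brace_soc m"
    using that closed shifted_lambda_is_reflection[OF central, where d = 0 and X = X]
      shifted_lambda_involutive[OF central, of 0] by (simp only: k1_as_shifted_lambda) simp
  have part2: "is_reflection X (yb_map m) (\<lambda>x. m c x + c) \<and> (\<forall>x\<in>X. m c (m c x + c) + c = x)"
    if twice: "\<forall>x\<in>X. m c x + m c x = c + c + x + x" and cc: "m c c = 0"
      and "(\<lambda>x. m c x + c) ` X \<subseteq> X"
  proof -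
    have "brace_lambda z (c + c) = c + c" if "z \<in> X" for z
    proof -
      have "brace_lambda z (c + c) = m c z + m c z - z - z"
        unfolding brace_lambda_add using central by (simp add: brace_lambda_def)
      then show ?thesis using twice that by simp
    qed
    moreover have "brace_lambda c (c + c) = - (c + c)"
      unfolding brace_lambda_add using cc by (simp add: brace_lambda_def)
    ultimately show ?thesis
      using that closed cc soc_zero shifted_lambda_is_reflection[OF central, where d = "c + c" and X = X]
        shifted_lambda_involutive[OF central, of "c + c"] by (simp only: k2_as_shifted_lambda) simp
  qed
  show ?thesis using part1 part2 soc_zero by auto
qed

end
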